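(* Let $n\ge 2$ and let $\Gamma=(\gamma_{i,j})\in\mathcal{M}_n(\mathbb{R})$ be symmetric with entries in $[0,1]$, zero diagonal, and at least one strictly positive off-diagonal entry in each row, such that the weighted graph with weight matrix $\Gamma$ is connected. Let $\boldsymbol{\eta}=\Gamma\mathbf{1}_n$, $L=\operatorname{diag}(\boldsymbol{\eta})-\Gamma$, and \[ E\coloneqq L_{2:n,2:n}+\Gamma_{2:n,1}\,\mathbf{1}_{n-1}^\top\in\mathcal{M}_{n-1}(\mathbb{R}). \] Then every eigenvalue of $E$ is at least $\min\Gamma_{2:n,1}=\min_{2\le i\le n}\gamma_{i,1}$.
   Context: $\mathbf{1}_m$ is the all-ones vector of length $m$. $L_{2:n,2:n}$ is the submatrix of $L$ formed by rows and columns $2,\dots,n$; $\Gamma_{2:n,1}$ is the column vector $(\gamma_{2,1},\dots,\gamma_{n,1})^\top$. *)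

theory Defs
  imports "Jordan_Normal_Form.Matrix" "Jordan_Normal_Form.Determinant" "Jordan_Normal_Form.Char_Poly"
begin

(* Matrices of size n are represented as functions nat => nat => real on indices 0..n-1.
   Index 0 plays the role of the paper's index 1. *)

definition degvec :: "nat \<Rightarrow> (nat \<Rightarrow> nat \<Rightarrow> real) \<Rightarrow> nat \<Rightarrow> real" where
  "degvec n G i = (\<Sum>j<n. G i j)"

definition laplacian :: "nat \<Rightarrow> (nat \<Rightarrow> nat \<Rightarrow> real) \<Rightarrow> nat \<Rightarrow> nat \<Rightarrow> real" where
  "laplacian n G i j = (if i = j then degvec n G i else 0) - G i j"

definition Emat :: "nat \<Rightarrow> (nat \<Rightarrow> nat \<Rightarrow> real) \<Rightarrow> real mat" where
  "Emat n G = mat (n - 1) (n - 1) (\<lambda>(i, j). laplacian n G (i + 1) (j + 1) + G (i + 1) 0)"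

definition weighted_connected :: "nat \<Rightarrow> (nat \<Rightarrow> nat \<Rightarrow> real) \<Rightarrow> bool" where
  "weighted_connected n G =
     (\<forall>i<n. \<forall>j<n. (\<lambda>a b. a < n \<and> b < n \<and> 0 < G a b)\<^sup>*\<^sup>* i j)"

end

theory Submission
  imports Defs
begin

(*
  An eigenvector v of E lifts to f = (-\<Sum>\<^sub>i v\<^sub>i, v), an eigenvector of the Laplacian L for the
  same eigenvalue k with \<Sum>\<^sub>i f\<^sub>i = 0: rows 2..n of L f = k f are the equation E v = k v, and
  row 1 follows because the columns of L sum to zero. Since L is real symmetric, k is real and
  has a real eigenvector x with \<Sum>\<^sub>i x\<^sub>i = 0. With m the minimum of the weights \<gamma>\<^sub>i\<^sub>1,
    k |x|\<^sup>2 = x\<^sup>T L x = 1/2 \<Sum>\<^sub>i\<^sub>j \<gamma>\<^sub>i\<^sub>j (x\<^sub>i - x\<^sub>j)\<^sup>2 \<ge> \<Sum>\<^sub>i \<gamma>\<^sub>i\<^sub>1 (x\<^sub>i - x\<^sub>1)\<^sup>2 \<ge> m \<Sum>\<^sub>i (x\<^sub>i - x\<^sub>1)\<^sup>2 \<ge> m |x|\<^sup>2,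
  the last step because \<Sum>\<^sub>i (x\<^sub>i - c)\<^sup>2 = |x|\<^sup>2 + n c\<^sup>2 whenever \<Sum>\<^sub>i x\<^sub>i = 0.
*)

lemma real_symmetric_eigenvalue_real:
  fixes A :: "nat \<Rightarrow> nat \<Rightarrow> real" and f :: "nat \<Rightarrow> complex"
  assumes sym: "\<And>i j. i < n \<Longrightarrow> j < n \<Longrightarrow> A i j = A j i"
    and eig: "\<And>i. i < n \<Longrightarrow> (\<Sum>j<n. of_real (A i j) * f j) = k * f i"
    and nonzero: "\<exists>i<n. f i \<noteq> 0"
  shows "Im k = 0"
proof -
  define S where "S = (\<Sum>i<n. cnj (f i) * (\<Sum>j<n. of_real (A i j) * f j))"
  define N where "N = (\<Sum>i<n. (cmod (f i))\<^sup>2)"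
  have "S = (\<Sum>i<n. k * (f i * cnj (f i)))"
    unfolding S_def by (intro sum.cong) (simp_all add: eig)
  then have S_eq: "S = k * of_real N"
    by (simp only: N_def of_real_sum complex_norm_square sum_distrib_left)
  have "cnj S = (\<Sum>i<n. \<Sum>j<n. of_real (A i j) * f i * cnj (f j))"
    by (simp add: S_def sum_distrib_left mult_ac)
  also have "\<dots> = (\<Sum>j<n. \<Sum>i<n. of_real (A j i) * f i * cnj (f j))"
    using sym by (subst sum.swap) (auto intro!: sum.cong)
  also have "\<dots> = S"
    by (simp add: S_def sum_distrib_left mult_ac)
  finally have "Im S = 0"
    by (metis complex_is_Real_iff Reals_cnj_iff)
  moreover have "N > 0"
    using nonzero unfolding N_def by (auto intro!: sum_pos2)
  ultimately show ?thesis
    using S_eq by simp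
qed

lemma sum_square_le_sum_square_diff:
  fixes x :: "'a \<Rightarrow> real"
  assumes "finite A" and "(\<Sum>i\<in>A. x i) = 0"
  shows "(\<Sum>i\<in>A. (x i)\<^sup>2) \<le> (\<Sum>i\<in>A. (x i - c)\<^sup>2)"
proof -
  have "(\<Sum>i\<in>A. (x i - c)\<^sup>2) = (\<Sum>i\<in>A. (x i)\<^sup>2) - 2 * c * (\<Sum>i\<in>A. x i) + real (card A) * c\<^sup>2"
    by (simp add: power2_diff sum.distrib sum_subtractf sum_distrib_left sum_distrib_right mult_ac)
  then show ?thesis
    using assms(2) by simp
qed

lemma row_col_sum_le_double_sum:
  fixes F :: "'a \<Rightarrow> 'a \<Rightarrow> real"
  assumes "finite A" and "c \<in> A"
    and "\<And>i j. i \<in> A \<Longrightarrow> j \<in> A \<Longrightarrow> 0 \<le> F i j" and "F c c = 0"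
  shows "(\<Sum>i\<in>A. F i c) + (\<Sum>j\<in>A. F c j) \<le> (\<Sum>i\<in>A. \<Sum>j\<in>A. F i j)"
proof -
  have "(\<Sum>i\<in>A - {c}. F i c) \<le> (\<Sum>i\<in>A - {c}. \<Sum>j\<in>A. F i j)"
    using assms by (intro sum_mono member_le_sum) auto
  then show ?thesis
    using assms by (simp add: sum.remove[of A c])
qed

lemma laplacian_symmetric:
  assumes "\<And>i j. i < n \<Longrightarrow> j < n \<Longrightarrow> G i j = G j i" and "i < n" and "j < n"
  shows "laplacian n G i j = laplacian n G j i"
  using assms unfolding laplacian_def by auto

lemma sum_laplacian_column:
  assumes "\<And>i j. i < n \<Longrightarrow> j < n \<Longrightarrow> G i j = G j i" and "j < n"
  shows "(\<Sum>i<n. laplacian n G i j) = 0"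
  using assms by (simp add: laplacian_def sum_subtractf degvec_def)

lemma laplacian_quadratic_form:
  fixes x :: "nat \<Rightarrow> real"
  assumes sym: "\<And>i j. i < n \<Longrightarrow> j < n \<Longrightarrow> G i j = G j i"
  shows "(\<Sum>i<n. x i * (\<Sum>j<n. laplacian n G i j * x j)) = (\<Sum>i<n. \<Sum>j<n. G i j * (x i - x j)\<^sup>2) / 2"
proof -
  have row: "(\<Sum>j<n. laplacian n G i j * x j) = degvec n G i * x i - (\<Sum>j<n. G i j * x j)"
    if "i < n" for i
    using that by (simp add: laplacian_def left_diff_distrib sum_subtractf if_distrib[of "\<lambda>a. a * _"])
  have degree_terms: "(\<Sum>i<n. \<Sum>j<n. G i j * (x j)\<^sup>2) = (\<Sum>i<n. degvec n G i * (x i)\<^sup>2)"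
    using sym by (subst sum.swap) (simp add: degvec_def sum_distrib_right)
  have "(\<Sum>i<n. \<Sum>j<n. G i j * (x i - x j)\<^sup>2)
      = (\<Sum>i<n. \<Sum>j<n. G i j * (x i)\<^sup>2) + (\<Sum>i<n. \<Sum>j<n. G i j * (x j)\<^sup>2)
        - 2 * (\<Sum>i<n. \<Sum>j<n. G i j * x i * x j)"
    by (simp add: power2_diff algebra_simps sum.distrib sum_subtractf sum_distrib_left)
  also have "\<dots> = 2 * ((\<Sum>i<n. degvec n G i * (x i)\<^sup>2) - (\<Sum>i<n. \<Sum>j<n. G i j * x i * x j))"
    using degree_terms by (simp add: degvec_def sum_distrib_right)
  also have "\<dots> = 2 * (\<Sum>i<n. x i * (degvec n G i * x i - (\<Sum>j<n. G i j * x j)))"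
    by (simp add: right_diff_distrib sum_subtractf sum_distrib_left power2_eq_square mult_ac)
  also have "\<dots> = 2 * (\<Sum>i<n. x i * (\<Sum>j<n. laplacian n G i j * x j))"
    using row by simp
  finally show ?thesis
    by simp
qed

lemma laplacian_quadratic_form_ge:
  fixes x :: "nat \<Rightarrow> real"
  assumes sym: "\<And>i j. i < n \<Longrightarrow> j < n \<Longrightarrow> G i j = G j i"
    and nonneg: "\<And>i j. i < n \<Longrightarrow> j < n \<Longrightarrow> 0 \<le> G i j"
    and m_nonneg: "0 \<le> m" and m_le: "\<And>i. 0 < i \<Longrightarrow> i < n \<Longrightarrow> m \<le> G i 0"
    and "0 < n" and sum_zero: "(\<Sum>i<n. x i) = 0"
  shows "m * (\<Sum>i<n. (x i)\<^sup>2) \<le> (\<Sum>i<n. x i * (\<Sum>j<n. laplacian n G i j * x j))"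
proof -
  have "m * (\<Sum>i<n. (x i)\<^sup>2) \<le> m * (\<Sum>i<n. (x i - x 0)\<^sup>2)"
    using sum_square_le_sum_square_diff[OF _ sum_zero] m_nonneg by (simp add: mult_left_mono)
  also have "\<dots> \<le> (\<Sum>i<n. G i 0 * (x i - x 0)\<^sup>2)"
    unfolding sum_distrib_left
  proof (intro sum_mono)
    fix i
    show "m * (x i - x 0)\<^sup>2 \<le> G i 0 * (x i - x 0)\<^sup>2" if "i \<in> {..<n}"
      using that m_le by (cases "i = 0") (auto intro: mult_right_mono)
  qed
  also have "\<dots> = ((\<Sum>i<n. G i 0 * (x i - x 0)\<^sup>2) + (\<Sum>j<n. G 0 j * (x 0 - x j)\<^sup>2)) / 2"
    using sym \<open>0 < n\<close> by (simp add: power2_commute)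
  also have "\<dots> \<le> (\<Sum>i<n. \<Sum>j<n. G i j * (x i - x j)\<^sup>2) / 2"
    using nonneg \<open>0 < n\<close> by (intro divide_right_mono row_col_sum_le_double_sum) auto
  also have "\<dots> = (\<Sum>i<n. x i * (\<Sum>j<n. laplacian n G i j * x j))"
    using laplacian_quadratic_form[OF sym] by simp
  finally show ?thesis .
qed

lemma laplacian_eigenvalue_ge:
  fixes x :: "nat \<Rightarrow> real"
  assumes sym: "\<And>i j. i < n \<Longrightarrow> j < n \<Longrightarrow> G i j = G j i"
    and nonneg: "\<And>i j. i < n \<Longrightarrow> j < n \<Longrightarrow> 0 \<le> G i j"
    and m_nonneg: "0 \<le> m" and m_le: "\<And>i. 0 < i \<Longrightarrow> i < n \<Longrightarrow> m \<le> G i 0"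
    and sum_zero: "(\<Sum>i<n. x i) = 0" and nonzero: "\<exists>i<n. x i \<noteq> 0"
    and eig: "\<And>i. i < n \<Longrightarrow> (\<Sum>j<n. laplacian n G i j * x j) = l * x i"
  shows "m \<le> l"
proof -
  have "0 < n"
    using nonzero by auto
  have norm_pos: "0 < (\<Sum>i<n. (x i)\<^sup>2)"
    using nonzero by (auto intro!: sum_pos2)
  have "m * (\<Sum>i<n. (x i)\<^sup>2) \<le> (\<Sum>i<n. x i * (\<Sum>j<n. laplacian n G i j * x j))"
    using sym nonneg m_nonneg m_le \<open>0 < n\<close> sum_zero by (rule laplacian_quadratic_form_ge)
  also have "\<dots> = (\<Sum>i<n. x i * (l * x i))"
    by (intro sum.cong) (simp_all add: eig)
  also have "\<dots> = l * (\<Sum>i<n. (x i)\<^sup>2)"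
    by (simp add: sum_distrib_left power2_eq_square mult_ac)
  finally show ?thesis
    using norm_pos by (rule mult_right_le_imp_le)
qed

lemma laplacian_complex_eigenvalue_ge:
  fixes f :: "nat \<Rightarrow> complex"
  assumes sym: "\<And>i j. i < n \<Longrightarrow> j < n \<Longrightarrow> G i j = G j i"
    and nonneg: "\<And>i j. i < n \<Longrightarrow> j < n \<Longrightarrow> 0 \<le> G i j"
    and m_nonneg: "0 \<le> m" and m_le: "\<And>i. 0 < i \<Longrightarrow> i < n \<Longrightarrow> m \<le> G i 0"
    and sum_zero: "(\<Sum>i<n. f i) = 0" and nonzero: "\<exists>i<n. f i \<noteq> 0"
    and eig: "\<And>i. i < n \<Longrightarrow> (\<Sum>j<n. of_real (laplacian n G i j) * f j) = k * f i"
  shows "Im k = 0 \<and> m \<le> Re k"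
proof
  show real: "Im k = 0"
    using laplacian_symmetric[OF sym] eig nonzero by (rule real_symmetric_eigenvalue_real)
  obtain part :: "complex \<Rightarrow> real"
    where part: "part = Re \<or> part = Im" and part_nonzero: "\<exists>i<n. part (f i) \<noteq> 0"
    using nonzero complex_eq_iff by auto
  have part_sum_zero: "(\<Sum>i<n. part (f i)) = 0"
    using arg_cong[OF sum_zero, of part] part by auto
  have part_eig: "(\<Sum>j<n. laplacian n G i j * part (f j)) = Re k * part (f i)" if "i < n" for i
    using arg_cong[OF eig[OF that], of part] part real by auto
  show "m \<le> Re k"
    using sym nonneg m_nonneg m_le part_sum_zero part_nonzero part_eig by (rule laplacian_eigenvalue_ge)
qed

lemma sum_laplacian_mult:
  fixes f :: "nat \<Rightarrow> 'a :: real_algebra_1"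
  assumes "\<And>i j. i < n \<Longrightarrow> j < n \<Longrightarrow> G i j = G j i"
  shows "(\<Sum>i<n. \<Sum>j<n. of_real (laplacian n G i j) * f j) = 0"
proof -
  have "(\<Sum>i<n. \<Sum>j<n. of_real (laplacian n G i j) * f j) = (\<Sum>j<n. of_real (\<Sum>i<n. laplacian n G i j) * f j)"
    by (subst sum.swap) (simp add: sum_distrib_right)
  then show ?thesis
    using sum_laplacian_column[OF assms] by simp
qed

lemma laplacian_eigen_row_0:
  fixes f :: "nat \<Rightarrow> 'a :: real_field"
  assumes sym: "\<And>i j. i < n \<Longrightarrow> j < n \<Longrightarrow> G i j = G j i"
    and "0 < n" and sum_zero: "(\<Sum>i<n. f i) = 0"
    and rows: "\<And>i. 0 < i \<Longrightarrow> i < n \<Longrightarrow> (\<Sum>j<n. of_real (laplacian n G i j) * f j) = k * f i"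
  shows "(\<Sum>j<n. of_real (laplacian n G 0 j) * f j) = k * f 0"
proof -
  let ?Lf = "\<lambda>i. \<Sum>j<n. of_real (laplacian n G i j) * f j"
  have others: "{..<n} - {0} = {i. 0 < i \<and> i < n}"
    by auto
  have "0 = (\<Sum>i<n. ?Lf i)"
    using sum_laplacian_mult[where n=n and G=G and f=f] sym by simp
  also have "\<dots> = ?Lf 0 + (\<Sum>i\<in>{..<n} - {0}. ?Lf i)"
    using \<open>0 < n\<close> by (simp add: sum.remove[of _ 0])
  also have "\<dots> = ?Lf 0 + k * (\<Sum>i\<in>{..<n} - {0}. f i)"
    unfolding others by (simp add: rows sum_distrib_left)
  also have "(\<Sum>i\<in>{..<n} - {0}. f i) = - f 0"
    using sum_zero \<open>0 < n\<close> by (simp add: sum.remove[of _ 0] eq_neg_iff_add_eq_0 add.commute)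
  finally show ?thesis
    by (simp add: eq_neg_iff_add_eq_0)
qed

lemma Emat_eigenvalue_lifts_to_laplacian:
  assumes "0 < n" and sym: "\<And>i j. i < n \<Longrightarrow> j < n \<Longrightarrow> G i j = G j i"
    and "eigenvalue (map_mat complex_of_real (Emat n G)) k"
  obtains f :: "nat \<Rightarrow> complex"
  where "(\<Sum>i<n. f i) = 0" and "\<exists>i<n. f i \<noteq> 0"
    and "\<And>i. i < n \<Longrightarrow> (\<Sum>j<n. of_real (laplacian n G i j) * f j) = k * f i"
proof -
  obtain n' where n: "n = Suc n'"
    using \<open>0 < n\<close> gr0_conv_Suc by blast
  have split_first: "(\<Sum>j<n. g j) = g 0 + (\<Sum>j<n'. g (Suc j))" for g :: "nat \<Rightarrow> complex"
    by (simp only: n sum.lessThan_Suc_shift)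
  obtain v where v: "v \<in> carrier_vec n'" "v \<noteq> 0\<^sub>v n'"
    and ev: "map_mat complex_of_real (Emat n G) *\<^sub>v v = k \<cdot>\<^sub>v v"
    using assms(3) unfolding eigenvalue_def eigenvector_def by (auto simp: Emat_def n)
  define T where "T = (\<Sum>j<n'. v $ j)"
  define f where "f = case_nat (- T) (\<lambda>j. v $ j)"
  have sum_zero: "(\<Sum>i<n. f i) = 0"
    by (simp add: split_first f_def T_def)
  have "\<exists>i<n'. v $ i \<noteq> 0"
    using v by (metis carrier_vecD eq_vecI index_zero_vec)
  then have nonzero: "\<exists>i<n. f i \<noteq> 0"
    by (auto simp: n f_def)
  have E_row: "(\<Sum>j<n'. of_real (laplacian n G (Suc i) (Suc j) + G (Suc i) 0) * v $ j) = k * v $ i"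
    if "i < n'" for i
  proof -
    have "(map_mat complex_of_real (Emat n G) *\<^sub>v v) $ i = (k \<cdot>\<^sub>v v) $ i"
      using ev by simp
    then show ?thesis
      using that v by (simp add: Emat_def n scalar_prod_def lessThan_atLeast0)
  qed
  have row_Suc: "(\<Sum>j<n. of_real (laplacian n G (Suc i) j) * f j) = k * f (Suc i)" if "i < n'" for i
  proof -
    have "(\<Sum>j<n. of_real (laplacian n G (Suc i) j) * f j)
        = of_real (G (Suc i) 0) * T + (\<Sum>j<n'. of_real (laplacian n G (Suc i) (Suc j)) * v $ j)"
      by (simp add: split_first f_def laplacian_def)
    also have "\<dots> = (\<Sum>j<n'. of_real (laplacian n G (Suc i) (Suc j) + G (Suc i) 0) * v $ j)"
      by (simp add: T_def distrib_right sum.distrib sum_distrib_left)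
    finally show ?thesis
      using E_row[OF that] by (simp add: f_def)
  qed
  have "(\<Sum>j<n. of_real (laplacian n G i j) * f j) = k * f i" if "0 < i" and "i < n" for i
    using that row_Suc by (cases i) (auto simp: n)
  then have "(\<Sum>j<n. of_real (laplacian n G i j) * f j) = k * f i" if "i < n" for i
    using that sym \<open>0 < n\<close> sum_zero laplacian_eigen_row_0[where f=f] by (cases "i = 0") auto
  with sum_zero nonzero that show ?thesis
    by blast
qed

theorem lemma4p5:
  fixes n :: nat and G :: "nat \<Rightarrow> nat \<Rightarrow> real" and k :: complex
  assumes "n \<ge> 2"
    and "\<And>i j. i < n \<Longrightarrow> j < n \<Longrightarrow> G i j = G j i"
    and "\<And>i j. i < n \<Longrightarrow> j < n \<Longrightarrow> 0 \<le> G i j \<and> G i j \<le> 1"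
    and "\<And>i. i < n \<Longrightarrow> G i i = 0"
    and "\<And>i. i < n \<Longrightarrow> \<exists>j<n. j \<noteq> i \<and> 0 < G i j"
    and "weighted_connected n G"
    and "eigenvalue (map_mat complex_of_real (Emat n G)) k"
  shows "Im k = 0 \<and> Min ((\<lambda>i. G i 0) ` {1..<n}) \<le> Re k"
proof -
  note sym = assms(2)
  have nonneg: "\<And>i j. i < n \<Longrightarrow> j < n \<Longrightarrow> 0 \<le> G i j"
    using assms(3) by blast
  have "0 < n"
    using assms(1) by simp
  then obtain f :: "nat \<Rightarrow> complex"
    where f_sum: "(\<Sum>i<n. f i) = 0" and f_nonzero: "\<exists>i<n. f i \<noteq> 0"
      and f_eig: "\<And>i. i < n \<Longrightarrow> (\<Sum>j<n. of_real (laplacian n G i j) * f j) = k * f i"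
    using Emat_eigenvalue_lifts_to_laplacian[OF _ sym assms(7)] by blast
  define m where "m = Min ((\<lambda>i. G i 0) ` {1..<n})"
  have m_nonneg: "0 \<le> m"
    using assms(1) nonneg by (auto simp: m_def)
  have m_le: "m \<le> G i 0" if "0 < i" and "i < n" for i
    using that by (simp add: m_def)
  have "Im k = 0 \<and> m \<le> Re k"
    using sym nonneg m_nonneg m_le f_sum f_nonzero f_eig by (rule laplacian_complex_eigenvalue_ge)
  then show ?thesis
    by (simp add: m_def)
qed

end
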